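(* A metrizable space $X$ satisfies $S_1(\mathcal{K}_{\Omega},\mathcal{K}_{\Omega})$ if and only if $vet_1(Q_p(X,\mathbb{D}))=\omega$.
   Context: A function $f:X\to Y$ is quasicontinuous if for every $x\in X$, every open $V\ni f(x)$ and every open $U\ni x$ there is a nonempty open $W\subseteq U$ with $f(W)\subseteq V$. $Q_p(X,\mathbb{D})$ is the space of quasicontinuous functions from $X$ to the discrete space $\mathbb{D}=\{0,1\}$ with the topology of pointwise convergence. $\mathcal{K}_\Omega$ is the set of families $\mathcal{U}$ of open subsets of $X$ with $X=\bigcup\{\overline{U}:U\in\mathcal{U}\}$, no element of $\mathcal{U}$ dense in $X$, and for each finite $F\subseteq X$ some $U\in\mathcal{U}$ with $F\subseteq\overline{U}$. $S_1(\mathcal{A},\mathcal{B})$: for every sequence $(A_n)_{n\in\mathbb{N}}$ of elements of $\mathcal{A}$ there are $b_n\in A_n$ with $\{b_n:n\in\mathbb{N}\}\in\mathcal{B}$. $vet_1(Z)=\omega$ means: for every $z\in Z$ and every sequence $(A_n)_{n\in\omega}$ of subsets of $Z$ with $z\in\bigcap_n\overline{A_n}$ there are $a_n\in A_n$ with $z\in\overline{\{a_n:n\in\omega\}}$. *)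

theory Defs
  imports "HOL-Analysis.Analysis"
begin

definition quasicontinuous_map :: "'a topology \<Rightarrow> 'b topology \<Rightarrow> ('a \<Rightarrow> 'b) \<Rightarrow> bool" where
  "quasicontinuous_map X Y f \<longleftrightarrow>
     f \<in> topspace X \<rightarrow> topspace Y \<and>
     (\<forall>x\<in>topspace X. \<forall>V U. openin Y V \<and> f x \<in> V \<and> openin X U \<and> x \<in> U \<longrightarrow>
        (\<exists>W. openin X W \<and> W \<noteq> {} \<and> W \<subseteq> U \<and> f ` W \<subseteq> V))"

text \<open>The discrete two-point space D = {0,1}, represented by bool.\<close>
abbreviation D2 :: "bool topology" where
  "D2 \<equiv> discrete_topology UNIV"

text \<open>Q_p(X,D): quasicontinuous functions X -> D with the topology of pointwise
  convergence, i.e. as a subspace of the product D^X (functions are extensional: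
  undefined outside topspace X).\<close>
definition Qp :: "'a topology \<Rightarrow> ('a \<Rightarrow> bool) topology" where
  "Qp X = subtopology (product_topology (\<lambda>_. D2) (topspace X))
            {f \<in> extensional (topspace X). quasicontinuous_map X D2 f}"

definition K_Omega :: "'a topology \<Rightarrow> 'a set set set" where
  "K_Omega X = {\<U>. (\<forall>U\<in>\<U>. openin X U) \<and>
                   topspace X = \<Union>{X closure_of U | U. U \<in> \<U>} \<and>
                   (\<forall>U\<in>\<U>. X closure_of U \<noteq> topspace X) \<and>
                   (\<forall>F. finite F \<and> F \<subseteq> topspace X \<longrightarrow> (\<exists>U\<in>\<U>. F \<subseteq> X closure_of U))}"

definition S1 :: "'b set set \<Rightarrow> 'b set set \<Rightarrow> bool" where
  "S1 \<A> \<B> \<longleftrightarrow> (\<forall>A :: nat \<Rightarrow> 'b set. (\<forall>n. A n \<in> \<A>) \<longrightarrow>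
                 (\<exists>b. (\<forall>n. b n \<in> A n) \<and> range b \<in> \<B>))"

definition vet1_omega :: "'z topology \<Rightarrow> bool" where
  "vet1_omega Z \<longleftrightarrow> (\<forall>z\<in>topspace Z. \<forall>A :: nat \<Rightarrow> 'z set.
      (\<forall>n. A n \<subseteq> topspace Z) \<and> (\<forall>n. z \<in> Z closure_of A n) \<longrightarrow>
      (\<exists>a. (\<forall>n. a n \<in> A n) \<and> z \<in> Z closure_of range a))"

end

theory Submission
  imports Defs
begin

text \<open>
  If vet_1(Q_p(X,D)) = omega: for open U the indicator of the closure of U is quasicontinuous, so a
  family in K_Omega becomes a set of such indicators accumulating at the constant function True, and
  a sequence selected by vet_1 comes from members of the families that again form a K_Omega family.

  Conversely, let X be metric and infinite (for finite X the space Q_p(X,D) is discrete). A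
  quasicontinuous z is locally constant on a dense open set V, and S_1(K_Omega,K_Omega) forces the
  remainder N = X - V to be countable: otherwise the open sets whose closures meet N in finitely
  many points would form a K_Omega family, and a countable subfamily in K_Omega would cover N.
  Enumerate N. Given z in the closure of every A_n, the open sets U with non-dense closure for which
  some g in A_n agrees with z on the first n points of N and on the points of the closure of U at
  distance at least 1/(n+1) from N form a K_Omega family. Selecting U_n from these and taking the
  witnessing g_n in A_n, every finite set F lies in the closure of U_n for arbitrarily large n, and
  for large n each point of F is either enumerated or at distance at least 1/(n+1) from N; hence
  g_n agrees with z on F, i.e. z is in the closure of the g_n.
\<close>

lemma topspace_Qp: "topspace (Qp X) = {f \<in> extensional (topspace X). quasicontinuous_map X D2 f}"
  unfolding Qp_def by (auto simp: PiE_def)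

lemma in_closure_of_product_discrete:
  fixes S :: "('a \<Rightarrow> 'b) set" and I :: "'a set"
  defines "P \<equiv> product_topology (\<lambda>_. discrete_topology UNIV) I"
  assumes S: "S \<subseteq> topspace P" and z: "z \<in> topspace P"
  shows "z \<in> P closure_of S \<longleftrightarrow> (\<forall>F. finite F \<and> F \<subseteq> I \<longrightarrow> (\<exists>s\<in>S. \<forall>x\<in>F. s x = z x))"
    (is "_ \<longleftrightarrow> ?agree")
proof
  assume cl: "z \<in> P closure_of S"
  show ?agree
  proof (intro allI impI)
    fix F assume F: "finite F \<and> F \<subseteq> I"
    define B where "B = PiE I (\<lambda>i. if i \<in> F then {z i} else UNIV)"
    have "openin P B"
      unfolding B_def P_def openin_PiE_gen
      by (rule disjI2, rule conjI, rule finite_subset[of _ F]) (use F in auto)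
    moreover have "z \<in> B" using z by (auto simp: B_def P_def)
    ultimately obtain s where "s \<in> S" "s \<in> B" using cl unfolding in_closure_of by blast
    moreover have "s x = z x" if "s \<in> B" "x \<in> F" for s x
      using PiE_mem[OF that(1)[unfolded B_def], of x] that(2) F by auto
    ultimately show "\<exists>s\<in>S. \<forall>x\<in>F. s x = z x" by blast
  qed
next
  assume agree: ?agree
  show "z \<in> P closure_of S" unfolding in_closure_of
  proof (intro conjI allI impI z)
    fix B assume "z \<in> B \<and> openin P B"
    then obtain U where U: "finite {i \<in> I. U i \<noteq> UNIV}" "z \<in> PiE I U" "PiE I U \<subseteq> B"
      unfolding P_def openin_product_topology_alt by auto
    then obtain s where s: "s \<in> S" "\<forall>x\<in>{i \<in> I. U i \<noteq> UNIV}. s x = z x"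
      using agree by (metis (no_types, lifting) mem_Collect_eq subsetI)
    have "s x \<in> U x" if "x \<in> I" for x
      using s(2) U(2) that by (cases "U x = UNIV") auto
    then have "s \<in> PiE I U"
      using s(1) S by (auto simp: PiE_iff P_def)
    then show "\<exists>s. s \<in> S \<and> s \<in> B" using s(1) U(3) by blast
  qed
qed

lemma in_closure_of_Qp:
  assumes "S \<subseteq> topspace (Qp X)" and "z \<in> topspace (Qp X)"
  shows "z \<in> Qp X closure_of S \<longleftrightarrow>
           (\<forall>F. finite F \<and> F \<subseteq> topspace X \<longrightarrow> (\<exists>s\<in>S. \<forall>x\<in>F. s x = z x))"
proof -
  let ?P = "product_topology (\<lambda>_. D2) (topspace X)"
  have "S \<subseteq> topspace ?P" "z \<in> topspace ?P"
    using assms by (auto simp: topspace_Qp PiE_def)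
  moreover have "z \<in> Qp X closure_of S \<longleftrightarrow> z \<in> ?P closure_of S"
    using assms by (simp add: Qp_def closure_of_subtopology topspace_Qp Int_absorb1)
  ultimately show ?thesis by (simp add: in_closure_of_product_discrete)
qed

lemma mem_K_Omega_iff:
  "\<U> \<in> K_Omega X \<longleftrightarrow>
     (\<forall>U\<in>\<U>. openin X U \<and> X closure_of U \<noteq> topspace X) \<and>
     (\<forall>F. finite F \<and> F \<subseteq> topspace X \<longrightarrow> (\<exists>U\<in>\<U>. F \<subseteq> X closure_of U))"
    (is "_ \<longleftrightarrow> ?nondense \<and> ?omega")
proof
  assume "\<U> \<in> K_Omega X"
  then show "?nondense \<and> ?omega"
    unfolding K_Omega_def mem_Collect_eq ball_conj_distrib by (elim conjE) (intro conjI)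
next
  assume R: "?nondense \<and> ?omega"
  have "topspace X \<subseteq> \<Union>{X closure_of U | U. U \<in> \<U>}"
  proof
    fix x assume "x \<in> topspace X"
    then obtain U where "U \<in> \<U>" "{x} \<subseteq> X closure_of U"
      using R[THEN conjunct2, rule_format, of "{x}"] by auto
    then show "x \<in> \<Union>{X closure_of U | U. U \<in> \<U>}" by blast
  qed
  moreover have "\<Union>{X closure_of U | U. U \<in> \<U>} \<subseteq> topspace X"
    using closure_of_subset_topspace by fastforce
  ultimately show "\<U> \<in> K_Omega X" using R
    unfolding K_Omega_def mem_Collect_eq ball_conj_distrib by (elim conjE) (intro conjI subset_antisym)
qed

lemma K_Omega_range_cofinal:
  fixes b :: "nat \<Rightarrow> 'a set"
  assumes cover: "range b \<in> K_Omega X" and F: "finite F" "F \<subseteq> topspace X"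
  shows "\<exists>n\<ge>K. F \<subseteq> X closure_of b n"
proof -
  have "\<exists>q. q \<in> topspace X - X closure_of b k" for k
  proof -
    have "X closure_of b k \<noteq> topspace X" using cover by (simp add: mem_K_Omega_iff)
    with closure_of_subset_topspace[of X "b k"] show ?thesis by blast
  qed
  then obtain q where q: "\<And>k. q k \<in> topspace X - X closure_of b k" by metis
  have "finite (F \<union> q ` {..<K})" using F(1) by simp
  moreover have "F \<union> q ` {..<K} \<subseteq> topspace X" using F(2) q by auto
  ultimately obtain n where n: "F \<union> q ` {..<K} \<subseteq> X closure_of b n"
    using cover[unfolded mem_K_Omega_iff, THEN conjunct2, rule_format, of "F \<union> q ` {..<K}"] by auto
  have "n \<ge> K"
  proof (rule ccontr)
    assume "\<not> n \<ge> K"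
    then have "q n \<in> X closure_of b n" using n by auto
    with q show False by blast
  qed
  with n show ?thesis by blast
qed

lemma quasicontinuous_map_D2_iff:
  "quasicontinuous_map X D2 g \<longleftrightarrow>
     (\<forall>x\<in>topspace X. x \<in> X closure_of (X interior_of {p \<in> topspace X. g p = g x}))"
proof -
  have "(\<forall>V U. openin D2 V \<and> g x \<in> V \<and> openin X U \<and> x \<in> U \<longrightarrow>
            (\<exists>W. openin X W \<and> W \<noteq> {} \<and> W \<subseteq> U \<and> g ` W \<subseteq> V)) \<longleftrightarrow>
        (\<forall>U. x \<in> U \<and> openin X U \<longrightarrow>
            (\<exists>y. y \<in> X interior_of {p \<in> topspace X. g p = g x} \<and> y \<in> U))"
    (is "?qc \<longleftrightarrow> (\<forall>U. x \<in> U \<and> openin X U \<longrightarrow> (\<exists>y. y \<in> ?I \<and> y \<in> U))")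
    for x
  proof
    assume qc: ?qc
    show "\<forall>U. x \<in> U \<and> openin X U \<longrightarrow> (\<exists>y. y \<in> ?I \<and> y \<in> U)"
    proof (intro allI impI)
      fix U assume "x \<in> U \<and> openin X U"
      then obtain W y where W: "openin X W" "y \<in> W" "W \<subseteq> U" "g ` W \<subseteq> {g x}"
        using qc[rule_format, of "{g x}" U] by auto
      then have "W \<subseteq> ?I"
        by (intro interior_of_maximal) (auto dest: openin_subset)
      then show "\<exists>y. y \<in> ?I \<and> y \<in> U" using W by blast
    qed
  next
    assume dense: "\<forall>U. x \<in> U \<and> openin X U \<longrightarrow> (\<exists>y. y \<in> ?I \<and> y \<in> U)"
    show ?qc
    proof (intro allI impI)
      fix V U assume VU: "openin D2 V \<and> g x \<in> V \<and> openin X U \<and> x \<in> U"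
      have "g ` ?I \<subseteq> V"
        using interior_of_subset[of X "{p \<in> topspace X. g p = g x}"] VU by auto
      then show "\<exists>W. openin X W \<and> W \<noteq> {} \<and> W \<subseteq> U \<and> g ` W \<subseteq> V"
        using dense VU by (intro exI[of _ "?I \<inter> U"]) auto
    qed
  qed
  then show ?thesis unfolding quasicontinuous_map_def in_closure_of by simp
qed

lemma quasicontinuous_map_closure_indicator:
  assumes "openin X U"
  shows "quasicontinuous_map X D2 (restrict (\<lambda>x. x \<in> X closure_of U) (topspace X))"
  unfolding quasicontinuous_map_D2_iff
proof
  let ?f = "restrict (\<lambda>x. x \<in> X closure_of U) (topspace X)"
  fix x assume x: "x \<in> topspace X"
  show "x \<in> X closure_of (X interior_of {p \<in> topspace X. ?f p = ?f x})"
  proof (cases "x \<in> X closure_of U")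
    case True
    have "U \<subseteq> {p \<in> topspace X. ?f p = ?f x}"
      using True x closure_of_subset[OF openin_subset[OF assms]] openin_subset[OF assms] by auto
    then have "U \<subseteq> X interior_of {p \<in> topspace X. ?f p = ?f x}"
      using assms by (rule interior_of_maximal)
    then show ?thesis using True closure_of_mono by blast
  next
    case False
    let ?O = "topspace X - X closure_of U"
    have "?O \<subseteq> X interior_of {p \<in> topspace X. ?f p = ?f x}"
      using False x by (intro interior_of_maximal) (auto simp: openin_diff)
    moreover have "x \<in> ?O" using False x by simp
    ultimately show ?thesis
      by (meson closure_of_subset interior_of_subset_topspace subsetD)
  qed
qed

lemma closure_indicator_in_topspace_Qp:
  "openin X U \<Longrightarrow> restrict (\<lambda>x. x \<in> X closure_of U) (topspace X) \<in> topspace (Qp X)"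
  by (simp add: topspace_Qp quasicontinuous_map_closure_indicator)

lemma S1_K_Omega_if_vet1_omega_Qp:
  assumes vet1: "vet1_omega (Qp X)"
  shows "S1 (K_Omega X) (K_Omega X)"
  unfolding S1_def
proof (intro allI impI)
  fix \<A> :: "nat \<Rightarrow> 'a set set" assume \<A>: "\<forall>n. \<A> n \<in> K_Omega X"
  define ind where "ind U = restrict (\<lambda>x. x \<in> X closure_of U) (topspace X)" for U
  define one where "one = ind (topspace X)"
  have ind_Qp: "ind U \<in> topspace (Qp X)" if "U \<in> \<A> n" for U n
    using \<A> that unfolding ind_def mem_K_Omega_iff by (blast intro: closure_indicator_in_topspace_Qp)
  have one_Qp: "one \<in> topspace (Qp X)"
    unfolding one_def ind_def by (rule closure_indicator_in_topspace_Qp[OF openin_topspace])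
  have ind_one: "(\<forall>x\<in>F. ind U x = one x) \<longleftrightarrow> F \<subseteq> X closure_of U"
    if "F \<subseteq> topspace X" for F U
    using that closure_of_topspace[of X] by (auto simp: one_def ind_def)
  have ind_\<A>_Qp: "ind ` \<A> n \<subseteq> topspace (Qp X)" for n using ind_Qp by blast
  moreover have "one \<in> Qp X closure_of (ind ` \<A> n)" for n
  proof -
    have "\<exists>s\<in>ind ` \<A> n. \<forall>x\<in>F. s x = one x" if "finite F" "F \<subseteq> topspace X" for F
      using \<A> that by (simp add: ind_one mem_K_Omega_iff)
    then show ?thesis using ind_\<A>_Qp by (simp add: in_closure_of_Qp one_Qp)
  qed
  ultimately obtain a where a: "\<And>n. a n \<in> ind ` \<A> n" and one_a: "one \<in> Qp X closure_of range a"
    using vet1[unfolded vet1_omega_def, rule_format, OF one_Qp, of "\<lambda>n. ind ` \<A> n"] by blast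
  have "\<forall>n. \<exists>U. U \<in> \<A> n \<and> a n = ind U" using a by (meson imageE)
  then obtain b where b: "\<And>n. b n \<in> \<A> n" and ab: "\<And>n. a n = ind (b n)"
    using choice[of "\<lambda>n U. U \<in> \<A> n \<and> a n = ind U"] by blast
  have "range a \<subseteq> topspace (Qp X)" using ind_Qp[OF b] ab by (simp add: image_subset_iff)
  then have "\<exists>n. F \<subseteq> X closure_of b n" if "finite F" "F \<subseteq> topspace X" for F
    using one_a that by (simp add: in_closure_of_Qp one_Qp ind_one ab)
  moreover have "openin X (b n) \<and> X closure_of b n \<noteq> topspace X" for n
    using \<A> b[of n] unfolding mem_K_Omega_iff by blast
  ultimately have "range b \<in> K_Omega X"
    unfolding mem_K_Omega_iff by simp
  with b show "\<exists>b. (\<forall>n. b n \<in> \<A> n) \<and> range b \<in> K_Omega X" by blast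
qed

lemma vet1_omega_Qp_if_finite:
  assumes "finite (topspace X)"
  shows "vet1_omega (Qp X)"
  unfolding vet1_omega_def
proof (intro ballI allI impI)
  fix z and A :: "nat \<Rightarrow> ('a \<Rightarrow> bool) set"
  assume z: "z \<in> topspace (Qp X)"
    and A: "(\<forall>n. A n \<subseteq> topspace (Qp X)) \<and> (\<forall>n. z \<in> Qp X closure_of A n)"
  have "z \<in> A n" for n
  proof -
    have "\<forall>F. finite F \<and> F \<subseteq> topspace X \<longrightarrow> (\<exists>s\<in>A n. \<forall>x\<in>F. s x = z x)"
      using A z in_closure_of_Qp[of "A n" X z] by blast
    then obtain s where s: "s \<in> A n" "\<forall>x\<in>topspace X. s x = z x"
      using assms by blast
    have "s = z"
      using s A z by (intro extensionalityI[of _ "topspace X"]) (auto simp: topspace_Qp)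
    with s show ?thesis by simp
  qed
  moreover have "z \<in> Qp X closure_of range (\<lambda>n. z)"
    using z closure_of_subset[of "{z}" "Qp X"] by simp
  ultimately show "\<exists>a. (\<forall>n. a n \<in> A n) \<and> z \<in> Qp X closure_of range a"
    by (intro exI[of _ "\<lambda>n. z"]) simp
qed

lemma closure_of_interior_of_Int:
  assumes "x \<in> X closure_of (X interior_of S)" and "x \<in> X interior_of T"
  shows "x \<in> X closure_of (X interior_of (S \<inter> T))"
proof -
  have "x \<in> X interior_of T \<inter> X closure_of (X interior_of S)" using assms by blast
  also have "\<dots> \<subseteq> X closure_of (X interior_of T \<inter> X interior_of S)"
    by (simp add: openin_Int_closure_of_subset)
  finally show ?thesis by (simp add: interior_of_Int Int_commute)
qed

definition locally_constant_points :: "'a topology \<Rightarrow> ('a \<Rightarrow> 'b) \<Rightarrow> 'a set" where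
  "locally_constant_points X z = (\<Union>b. X interior_of {p \<in> topspace X. z p = b})"

lemma openin_locally_constant_points: "openin X (locally_constant_points X z)"
  unfolding locally_constant_points_def by auto

lemma locally_constant_pointsD:
  "x \<in> locally_constant_points X z \<Longrightarrow> x \<in> X interior_of {p \<in> topspace X. z p = z x}"
  unfolding locally_constant_points_def using interior_of_subset by fastforce

lemma closure_of_locally_constant_points:
  assumes "quasicontinuous_map X D2 z"
  shows "X closure_of locally_constant_points X z = topspace X"
proof
  show "topspace X \<subseteq> X closure_of locally_constant_points X z"
  proof
    fix x assume "x \<in> topspace X"
    then have "x \<in> X closure_of (X interior_of {p \<in> topspace X. z p = z x})"
      using assms by (simp add: quasicontinuous_map_D2_iff)
    moreover have "X interior_of {p \<in> topspace X. z p = z x} \<subseteq> locally_constant_points X z"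
      unfolding locally_constant_points_def by blast
    ultimately show "x \<in> X closure_of locally_constant_points X z"
      by (meson closure_of_mono subsetD)
  qed
qed (rule closure_of_subset_topspace)

lemma exists_open_closure_of_Union:
  assumes "finite F"
    and "\<And>x. x \<in> F \<Longrightarrow> \<exists>U. openin X U \<and> x \<in> X closure_of U \<and> X closure_of U \<subseteq> S"
  shows "\<exists>U. openin X U \<and> F \<subseteq> X closure_of U \<and> X closure_of U \<subseteq> S"
proof -
  obtain U where U: "\<And>x. x \<in> F \<Longrightarrow> openin X (U x) \<and> x \<in> X closure_of U x \<and> X closure_of U x \<subseteq> S"
    using assms(2) by metis
  have "X closure_of (\<Union>x\<in>F. U x) = (\<Union>x\<in>F. X closure_of U x)"
    using closure_of_Union[of "U ` F" X] assms(1) by simp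
  then show ?thesis
    using U by (intro exI[of _ "\<Union>x\<in>F. U x"]) auto
qed

lemma in_closure_of_interior_of_agreement:
  assumes g: "quasicontinuous_map X D2 g" and x: "x \<in> locally_constant_points X z"
    and gx: "g x = z x"
  shows "x \<in> X closure_of (X interior_of {p \<in> topspace X. g p = z p})"
proof -
  have xX: "x \<in> topspace X"
    using x openin_subset[OF openin_locally_constant_points[of X z]] by blast
  have "x \<in> X closure_of (X interior_of ({p \<in> topspace X. g p = g x} \<inter> {p \<in> topspace X. z p = z x}))"
    using g xX locally_constant_pointsD[OF x]
    by (intro closure_of_interior_of_Int) (auto simp: quasicontinuous_map_D2_iff)
  moreover have "{p \<in> topspace X. g p = g x} \<inter> {p \<in> topspace X. z p = z x} \<subseteq> {p \<in> topspace X. g p = z p}"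
    using gx by auto
  ultimately show ?thesis
    by (meson closure_of_mono interior_of_mono subsetD)
qed

context Metric_space
begin

lemma closure_of_Union_shrinking_mballs:
  assumes x: "x \<in> M" and balls: "\<And>k. mball (y k) (t k) \<subseteq> mball x (r k)" and r: "r \<longlonglongrightarrow> 0"
  shows "mtopology closure_of (\<Union>k. mball (y k) (t k)) \<subseteq> insert x (\<Union>k. mcball (y k) (t k))"
proof
  fix p assume p: "p \<in> mtopology closure_of (\<Union>k. mball (y k) (t k))"
  show "p \<in> insert x (\<Union>k. mcball (y k) (t k))"
  proof (cases "p = x")
    case False
    have "p \<in> M" using p closure_of_subset_topspace by fastforce
    define \<delta> where "\<delta> = d x p"
    have "\<delta> > 0" using False \<open>p \<in> M\<close> x by (simp add: \<delta>_def)
    then obtain K where K: "\<And>k. k \<ge> K \<Longrightarrow> r k < \<delta>/2"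
      using order_tendstoD(2)[OF r, of "\<delta>/2"] unfolding eventually_sequentially by auto
    have "UNIV = {..<K} \<union> {K..}" by auto
    then have "p \<in> mtopology closure_of (\<Union>k<K. mball (y k) (t k)) \<union>
                 mtopology closure_of (\<Union>k\<in>{K..}. mball (y k) (t k))"
      using p by (metis UN_Un closure_of_Un)
    moreover have "mtopology closure_of (\<Union>k\<in>{K..}. mball (y k) (t k)) \<subseteq> mcball x (\<delta>/2)"
    proof (intro closure_of_minimal closedin_mcball UN_least)
      fix k assume "k \<in> {K..}"
      then have "mball x (r k) \<subseteq> mcball x (\<delta>/2)"
        using K mball_subset_mcball mball_subset_concentric[of "r k" "\<delta>/2" x] by force
      then show "mball (y k) (t k) \<subseteq> mcball x (\<delta>/2)" using balls by blast
    qed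
    moreover have "mtopology closure_of (\<Union>k<K. mball (y k) (t k)) \<subseteq> (\<Union>k<K. mcball (y k) (t k))"
      using mball_subset_mcball by (intro closure_of_minimal closedin_Union) auto
    moreover have "p \<notin> mcball x (\<delta>/2)" using \<open>\<delta> > 0\<close> by (simp add: \<delta>_def)
    ultimately show ?thesis by blast
  qed simp
qed

lemma exists_open_closure_of_subset_insert:
  assumes V: "openin mtopology V" and x: "x \<in> mtopology closure_of V"
  shows "\<exists>U. openin mtopology U \<and> x \<in> mtopology closure_of U \<and> mtopology closure_of U \<subseteq> insert x V"
proof -
  define r where "r k = inverse (real (Suc k))" for k
  have "\<exists>y t. y \<in> M \<and> d x y < r k / 2 \<and> 0 < t \<and> t \<le> r k / 2 \<and> mcball y t \<subseteq> V" for k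
  proof -
    have "r k / 2 > 0" by (simp add: r_def)
    then obtain y where y: "y \<in> V" "y \<in> mball x (r k / 2)"
      using x unfolding metric_closure_of by blast
    then obtain s where s: "s > 0" "mball y s \<subseteq> V"
      using V unfolding openin_mtopology by blast
    have "mcball y (min (s/2) (r k / 2)) \<subseteq> V"
      using s mcball_subset_mball_concentric[of "min (s/2) (r k / 2)" s y] by auto
    then show ?thesis
      using y s \<open>r k / 2 > 0\<close> by (intro exI[of _ y] exI[of _ "min (s/2) (r k / 2)"]) auto
  qed
  then obtain y t where yt: "\<And>k. y k \<in> M \<and> d x (y k) < r k / 2 \<and> 0 < t k \<and> t k \<le> r k / 2 \<and>
                                 mcball (y k) (t k) \<subseteq> V"
    by metis
  have xM: "x \<in> M" using x closure_of_subset_topspace by fastforce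
  define U where "U = (\<Union>k. mball (y k) (t k))"
  have balls: "mball (y k) (t k) \<subseteq> mball x (r k)" for k
  proof
    fix p assume p: "p \<in> mball (y k) (t k)"
    then have "d x p \<le> d x (y k) + d (y k) p" using triangle xM yt by auto
    then show "p \<in> mball x (r k)" using p yt[of k] xM by auto
  qed
  have r: "r \<longlonglongrightarrow> 0" unfolding r_def by (rule LIMSEQ_inverse_real_of_nat)
  have "x \<in> mtopology closure_of U"
    unfolding metric_closure_of
  proof (intro CollectI conjI allI impI xM)
    fix \<delta> :: real assume "\<delta> > 0"
    then obtain k where "r k < \<delta>"
      using order_tendstoD(2)[OF r] eventually_sequentially by (metis order_refl)
    then have "y k \<in> mball x \<delta>" using yt[of k] xM by auto
    moreover have "y k \<in> U" unfolding U_def using yt[of k] by blast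
    ultimately show "\<exists>y\<in>U. y \<in> mball x \<delta>" by blast
  qed
  moreover have "mtopology closure_of U \<subseteq> insert x V"
    using closure_of_Union_shrinking_mballs[OF xM balls r] yt unfolding U_def by blast
  moreover have "openin mtopology U" unfolding U_def by blast
  ultimately show ?thesis by blast
qed

lemma exists_open_closure_of_subset_avoiding:
  assumes x: "x \<in> mtopology closure_of (mtopology interior_of S)" "x \<in> S" and q: "q \<in> M" "q \<noteq> x"
  shows "\<exists>U. openin mtopology U \<and> x \<in> mtopology closure_of U \<and> mtopology closure_of U \<subseteq> S - {q}"
proof -
  define V where "V = mball x (d x q) \<inter> mtopology interior_of S"
  have "x \<in> M" using x(1) closure_of_subset_topspace by fastforce
  then have "x \<in> mball x (d x q)" using q by simp
  then have "x \<in> mtopology closure_of V"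
    using openin_Int_closure_of_subset[OF openin_mball, of x "d x q" "mtopology interior_of S"] x(1)
    unfolding V_def by blast
  moreover have "openin mtopology V" unfolding V_def by (intro openin_Int openin_mball openin_interior_of)
  moreover have "insert x V \<subseteq> S - {q}"
    using x(2) q interior_of_subset[of mtopology S] by (auto simp: V_def)
  ultimately show ?thesis
    using exists_open_closure_of_subset_insert by (meson order_trans)
qed

lemma K_Omega_finite_remainder:
  assumes V: "openin mtopology V" "mtopology closure_of V = M" and N: "infinite (M - V)"
  shows "{U. openin mtopology U \<and> mtopology closure_of U \<noteq> M \<and> finite (mtopology closure_of U - V)}
           \<in> K_Omega mtopology"
    (is "?\<W> \<in> _")
proof -
  have "\<exists>U\<in>?\<W>. F \<subseteq> mtopology closure_of U" if F: "finite F" "F \<subseteq> M" for F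
  proof -
    have "\<exists>U. openin mtopology U \<and> x \<in> mtopology closure_of U \<and> mtopology closure_of U \<subseteq> V \<union> F"
      if "x \<in> F" for x
      using exists_open_closure_of_subset_insert[OF V(1), of x] V(2) F that by blast
    then obtain U where U: "openin mtopology U" "F \<subseteq> mtopology closure_of U"
        "mtopology closure_of U \<subseteq> V \<union> F"
      using exists_open_closure_of_Union[OF F(1)] by metis
    have "mtopology closure_of U - V \<subseteq> F" using U(3) by blast
    then have "finite (mtopology closure_of U - V)" using F(1) by (rule finite_subset)
    moreover obtain q where "q \<in> M - V - F"
      using infinite_imp_nonempty[OF Diff_infinite_finite[OF F(1) N]] by blast
    then have "mtopology closure_of U \<noteq> M" using U(3) by blast
    ultimately show ?thesis using U(1,2) by blast
  qed
  then show ?thesis by (simp add: mem_K_Omega_iff)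
qed

lemma countable_diff_dense_open_if_S1_K_Omega:
  assumes S1: "S1 (K_Omega mtopology) (K_Omega mtopology)"
    and V: "openin mtopology V" "mtopology closure_of V = M"
  shows "countable (M - V)"
proof (rule ccontr)
  assume "\<not> countable (M - V)"
  then have "infinite (M - V)" using countable_finite by blast
  then obtain b :: "nat \<Rightarrow> 'a set"
    where b: "\<And>n. finite (mtopology closure_of b n - V)" and cover: "range b \<in> K_Omega mtopology"
    using S1[unfolded S1_def, rule_format, OF K_Omega_finite_remainder[OF V]] by auto
  have "M - V \<subseteq> (\<Union>n. mtopology closure_of b n - V)"
  proof
    fix q assume "q \<in> M - V"
    then have "\<exists>U\<in>range b. {q} \<subseteq> mtopology closure_of U"
      using cover[unfolded mem_K_Omega_iff, THEN conjunct2, rule_format, of "{q}"] by simp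
    with \<open>q \<in> M - V\<close> show "q \<in> (\<Union>n. mtopology closure_of b n - V)" by blast
  qed
  moreover have "countable (\<Union>n. mtopology closure_of b n - V)"
    using b by (intro countable_UN[OF countableI_type] countable_finite)
  ultimately show False
    using \<open>\<not> countable (M - V)\<close> countable_subset by blast
qed

definition agreement_sets ::
    "('a \<Rightarrow> bool) set \<Rightarrow> ('a \<Rightarrow> bool) \<Rightarrow> 'a set \<Rightarrow> 'a set \<Rightarrow> real \<Rightarrow> 'a set set" where
  "agreement_sets A z N G \<rho> =
     {U. openin mtopology U \<and> mtopology closure_of U \<noteq> M \<and>
         (\<exists>g\<in>A. \<forall>p \<in> G \<union> {p \<in> mtopology closure_of U. \<forall>y\<in>N. \<rho> \<le> d p y}. g p = z p)}"

lemma exists_open_closure_of_agreement: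
  assumes g: "quasicontinuous_map mtopology D2 g"
    and N: "M - locally_constant_points mtopology z \<subseteq> N" and "\<rho> > 0"
    and F: "finite F" "F \<subseteq> M" "\<And>x. x \<in> F \<Longrightarrow> g x = z x" and q: "q \<in> M - F"
  shows "\<exists>U. openin mtopology U \<and> F \<subseteq> mtopology closure_of U \<and> q \<notin> mtopology closure_of U \<and>
             (\<forall>p \<in> mtopology closure_of U. (\<forall>y\<in>N. \<rho> \<le> d p y) \<longrightarrow> g p = z p)"
proof -
  \<comment> \<open>near N nothing is required; away from N, quasicontinuity of g makes the agreement set
    of g and z have x in the closure of its interior\<close>
  define S where "S = {p \<in> M. g p = z p} \<union> {p \<in> M. \<exists>y\<in>N. d p y < \<rho>}"
  have S_dense: "x \<in> mtopology closure_of (mtopology interior_of S)" if "x \<in> F" for x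
  proof (cases "x \<in> N")
    case True
    have "mball x \<rho> \<subseteq> S" using True by (auto simp: S_def commute)
    then have "x \<in> mtopology interior_of S"
      using \<open>\<rho> > 0\<close> F that by (intro subsetD[OF interior_of_maximal[OF _ openin_mball]]) auto
    then show ?thesis
      by (meson closure_of_subset interior_of_subset_topspace subsetD)
  next
    case False
    then have "x \<in> locally_constant_points mtopology z" using N F that by blast
    then have "x \<in> mtopology closure_of (mtopology interior_of {p \<in> M. g p = z p})"
      using in_closure_of_interior_of_agreement[OF g] F(3) that by simp
    moreover have "{p \<in> M. g p = z p} \<subseteq> S" by (auto simp: S_def)
    ultimately show ?thesis
      by (meson closure_of_mono interior_of_mono subsetD)
  qed
  have FS: "F \<subseteq> S" using F by (auto simp: S_def)
  have "\<exists>U. openin mtopology U \<and> x \<in> mtopology closure_of U \<and> mtopology closure_of U \<subseteq> S - {q}"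
    if "x \<in> F" for x
    using q that
    by (intro exists_open_closure_of_subset_avoiding[OF S_dense[OF that] subsetD[OF FS that]]) auto
  then obtain U where U: "openin mtopology U" "F \<subseteq> mtopology closure_of U"
      "mtopology closure_of U \<subseteq> S - {q}"
    using exists_open_closure_of_Union[OF F(1)] by metis
  have "g p = z p" if "p \<in> mtopology closure_of U" "\<forall>y\<in>N. \<rho> \<le> d p y" for p
  proof -
    have "p \<in> S" using that(1) U(3) by blast
    moreover have "p \<notin> {p \<in> M. \<exists>y\<in>N. d p y < \<rho>}" using that(2) by (simp add: not_less)
    ultimately show ?thesis unfolding S_def by blast
  qed
  then show ?thesis using U by blast
qed

lemma agreement_sets_in_K_Omega:
  assumes M: "infinite M"
    and A: "A \<subseteq> topspace (Qp mtopology)" "z \<in> Qp mtopology closure_of A"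
    and N: "M - locally_constant_points mtopology z \<subseteq> N"
    and G: "finite G" "G \<subseteq> M" and "\<rho> > 0"
  shows "agreement_sets A z N G \<rho> \<in> K_Omega mtopology"
proof -
  have z: "z \<in> topspace (Qp mtopology)" using A(2) closure_of_subset_topspace by fastforce
  have "\<exists>U\<in>agreement_sets A z N G \<rho>. F \<subseteq> mtopology closure_of U" if F: "finite F" "F \<subseteq> M" for F
  proof -
    obtain g where g: "g \<in> A" "\<forall>x\<in>F \<union> G. g x = z x"
      using A F G in_closure_of_Qp[OF A(1) z] by (metis finite_UnI le_sup_iff topspace_mtopology)
    then have g_qc: "quasicontinuous_map mtopology D2 g" using A(1) by (auto simp: topspace_Qp)
    obtain q where q: "q \<in> M - F" using infinite_imp_nonempty[OF Diff_infinite_finite[OF F(1) M]] by blast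
    obtain U where U: "openin mtopology U" "F \<subseteq> mtopology closure_of U" "q \<notin> mtopology closure_of U"
        "\<forall>p \<in> mtopology closure_of U. (\<forall>y\<in>N. \<rho> \<le> d p y) \<longrightarrow> g p = z p"
      using exists_open_closure_of_agreement[OF g_qc N \<open>\<rho> > 0\<close> F _ q] g(2) by blast
    have "\<forall>p \<in> G \<union> {p \<in> mtopology closure_of U. \<forall>y\<in>N. \<rho> \<le> d p y}. g p = z p"
      using g(2) U(4) by auto
    moreover have "mtopology closure_of U \<noteq> M" using U(3) q by blast
    ultimately have "U \<in> agreement_sets A z N G \<rho>"
      using U(1) g(1) unfolding agreement_sets_def by blast
    with U(2) show ?thesis by blast
  qed
  moreover have "\<forall>U\<in>agreement_sets A z N G \<rho>. openin mtopology U \<and> mtopology closure_of U \<noteq> M"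
    by (simp add: agreement_sets_def)
  ultimately show ?thesis by (simp add: mem_K_Omega_iff)
qed

lemma eventually_enumerated_or_far:
  assumes N: "closedin mtopology N" "N \<subseteq> range c" and F: "finite F" "F \<subseteq> M"
  shows "\<forall>\<^sub>F n in sequentially. \<forall>x\<in>F. x \<in> N \<inter> c ` {..<n} \<or> (\<forall>y\<in>N. inverse (real (Suc n)) \<le> d x y)"
proof (intro eventually_ball_finite F(1) ballI)
  fix x assume "x \<in> F"
  then have x: "x \<in> M" using F(2) by blast
  show "\<forall>\<^sub>F n in sequentially. x \<in> N \<inter> c ` {..<n} \<or> (\<forall>y\<in>N. inverse (real (Suc n)) \<le> d x y)"
  proof (cases "x \<in> N")
    case True
    then obtain k where "x = c k" using N(2) by blast
    then have "\<forall>n\<ge>Suc k. x \<in> N \<inter> c ` {..<n}" using True by auto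
    then show ?thesis unfolding eventually_sequentially by blast
  next
    case False
    then obtain r where r: "r > 0" "mball x r \<subseteq> M - N"
      using N(1) x unfolding closedin_def openin_mtopology by auto
    then have "r \<le> d x y" if "y \<in> N" for y
      using that x closedin_subset[OF N(1)] by (force simp: not_le)
    moreover have "\<forall>\<^sub>F n in sequentially. inverse (real (Suc n)) < r"
      using order_tendstoD(2)[OF LIMSEQ_inverse_real_of_nat r(1)] .
    ultimately show ?thesis
      by (elim eventually_mono) (meson less_le_trans less_imp_le)
  qed
qed

lemma vet1_omega_Qp_if_S1_K_Omega:
  assumes S1: "S1 (K_Omega mtopology) (K_Omega mtopology)" and M: "infinite M"
  shows "vet1_omega (Qp mtopology)"
  unfolding vet1_omega_def
proof (intro ballI allI impI)
  fix z and A :: "nat \<Rightarrow> ('a \<Rightarrow> bool) set"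
  assume z: "z \<in> topspace (Qp mtopology)"
    and "(\<forall>n. A n \<subseteq> topspace (Qp mtopology)) \<and> (\<forall>n. z \<in> Qp mtopology closure_of A n)"
  then have A: "\<And>n. A n \<subseteq> topspace (Qp mtopology)" "\<And>n. z \<in> Qp mtopology closure_of A n"
    by auto
  define N where "N = M - locally_constant_points mtopology z"
  have "quasicontinuous_map mtopology D2 z" using z by (simp add: topspace_Qp)
  then have "countable N"
    unfolding N_def using closure_of_locally_constant_points[of mtopology z]
    by (intro countable_diff_dense_open_if_S1_K_Omega[OF S1 openin_locally_constant_points]) simp
  define c where "c = from_nat_into N"
  have N_enum: "N \<subseteq> range c" using \<open>countable N\<close> by (cases "N = {}") (simp_all add: c_def)
  have N_closed: "closedin mtopology N"
    unfolding N_def by (metis closedin_diff closedin_topspace openin_locally_constant_points topspace_mtopology)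
  \<comment> \<open>intersecting with N matters only for N = {}, where from_nat_into N is arbitrary\<close>
  define G where "G n = N \<inter> c ` {..<n}" for n
  define \<rho> where "\<rho> n = inverse (real (Suc n))" for n
  have "agreement_sets (A n) z N (G n) (\<rho> n) \<in> K_Omega mtopology" for n
    using M A by (intro agreement_sets_in_K_Omega) (auto simp: N_def G_def \<rho>_def)
  then obtain b :: "nat \<Rightarrow> 'a set"
    where b: "\<And>n. b n \<in> agreement_sets (A n) z N (G n) (\<rho> n)" and cover: "range b \<in> K_Omega mtopology"
    using S1[unfolded S1_def, rule_format, of "\<lambda>n. agreement_sets (A n) z N (G n) (\<rho> n)"] by auto
  define E where "E n = G n \<union> {p \<in> mtopology closure_of b n. \<forall>y\<in>N. \<rho> n \<le> d p y}" for n
  have "\<exists>g. g \<in> A n \<and> (\<forall>p\<in>E n. g p = z p)" for n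
    using b[of n] unfolding agreement_sets_def E_def mem_Collect_eq Bex_def by (elim conjE)
  then obtain a where "\<forall>n. a n \<in> A n \<and> (\<forall>p\<in>E n. a n p = z p)"
    using choice[of "\<lambda>n g. g \<in> A n \<and> (\<forall>p\<in>E n. g p = z p)"] by blast
  then have a: "\<And>n. a n \<in> A n" and agree: "\<And>n p. p \<in> E n \<Longrightarrow> a n p = z p"
    by auto
  have "\<exists>n. \<forall>x\<in>F. a n x = z x" if F: "finite F" "F \<subseteq> M" for F
  proof -
    obtain K where K: "\<And>n x. n \<ge> K \<Longrightarrow> x \<in> F \<Longrightarrow> x \<in> G n \<or> (\<forall>y\<in>N. \<rho> n \<le> d x y)"
      using eventually_enumerated_or_far[OF N_closed N_enum F]
      unfolding eventually_sequentially G_def \<rho>_def by blast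
    obtain n where "n \<ge> K" "F \<subseteq> mtopology closure_of b n"
      using K_Omega_range_cofinal[OF cover F(1), where K=K] F(2) by auto
    then have "F \<subseteq> E n" using K by (auto simp: E_def)
    then show ?thesis using agree by blast
  qed
  moreover have "range a \<subseteq> topspace (Qp mtopology)" using a A(1) by blast
  ultimately have "z \<in> Qp mtopology closure_of range a"
    using z by (simp add: in_closure_of_Qp)
  with a show "\<exists>a. (\<forall>n. a n \<in> A n) \<and> z \<in> Qp mtopology closure_of range a" by blast
qed

end

theorem corollary4p2:
  fixes X :: "'a topology"
  assumes "metrizable_space X"
  shows "S1 (K_Omega X) (K_Omega X) \<longleftrightarrow> vet1_omega (Qp X)"
proof
  assume S1: "S1 (K_Omega X) (K_Omega X)"
  obtain M d where md: "Metric_space M d" and X: "X = Metric_space.mtopology M d"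
    using assms unfolding metrizable_space_def by blast
  show "vet1_omega (Qp X)"
  proof (cases "finite (topspace X)")
    case True
    then show ?thesis by (rule vet1_omega_Qp_if_finite)
  next
    case False
    then show ?thesis
      using Metric_space.vet1_omega_Qp_if_S1_K_Omega[OF md] S1
      by (simp add: X Metric_space.topspace_mtopology[OF md])
  qed
next
  assume "vet1_omega (Qp X)"
  then show "S1 (K_Omega X) (K_Omega X)" by (rule S1_K_Omega_if_vet1_omega_Qp)
qed

end
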